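(* Let $(\phi_n^+)_{n\ge1}$ and $(\phi_n^-)_{n\ge1}$ be sequences of inner functions such that for every $r \in (0,1)$ there exist $\delta>0$ and $n_0$ with $|\phi_n^+(z) - i|\ge\delta$ and $|\phi_n^-(z)+i|\ge\delta$ for all $|z|\le r$ and $n\ge n_0$ (i.e., $\phi_n^+$ and $\phi_n^-$ are bounded away from $i$ and $-i$ respectively on $|z|\le r$ as $n\to\infty$). Then the product $$\prod_{n \geq 1} \frac{T(\phi_n^+)}{T(\phi_n^-)}$$ converges absolutely and locally uniformly on $\mathbb{D}$ if and only if $\sum_{n \geq 1} |\phi_n^+ - \phi_n^-|$ converges locally uniformly on $\mathbb{D}$.
   Context: $\mathbb{D}$ is the open unit disk. $T(z) = i\frac{1-iz}{1+iz}$ and $T(\phi)=T\circ\phi$. A product $\prod w_n$ of functions converges absolutely and locally uniformly on $\mathbb{D}$ if $\sum|1-w_n(z)|$ converges uniformly on compact subsets of $\mathbb{D}$. *)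

theory Defs
  imports "HOL-Analysis.Analysis"
begin

definition inner_function :: "(complex \<Rightarrow> complex) \<Rightarrow> bool" where
  "inner_function f \<longleftrightarrow>
     f holomorphic_on ball 0 1 \<and> bounded (f ` ball 0 1) \<and>
     (AE \<theta> in lborel. \<theta> \<in> {0..2*pi} \<longrightarrow>
        (\<exists>L. ((\<lambda>r. f (complex_of_real r * cis \<theta>)) \<longlongrightarrow> L) (at_left 1) \<and> norm L = 1))"

definition T :: "complex \<Rightarrow> complex" where
  "T z = \<i> * (1 - \<i> * z) / (1 + \<i> * z)"

definition loc_unif_series :: "(nat \<Rightarrow> complex \<Rightarrow> real) \<Rightarrow> bool" where
  "loc_unif_series u \<longleftrightarrow>
     (\<forall>K. compact K \<and> K \<subseteq> ball 0 1 \<longrightarrow>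
        uniformly_convergent_on K (\<lambda>N z. \<Sum>n\<in>{1..N}. u n z))"

definition prod_abs_loc_unif :: "(nat \<Rightarrow> complex \<Rightarrow> complex) \<Rightarrow> bool" where
  "prod_abs_loc_unif w \<longleftrightarrow> loc_unif_series (\<lambda>n z. norm (1 - w n z))"

end

theory Submission
  imports Defs "HOL-Complex_Analysis.Cauchy_Integral_Formula" "HOL-Real_Asymp.Real_Asymp"
begin

text \<open>
  Inner functions map the disk into the closed disk, so T(a) / T(b) = (a + i)(b - i) / ((a - i)(b + i))
  gives |1 - T(a)/T(b)| = 2 |a - b| / (|a - i| |b + i|). The denominator is at most 4, and on
  compact subsets it is eventually at least \<delta>^2 by hypothesis, so the two series dominate each other
  termwise up to constants.

  That |f| \<le> 1 for an inner function f follows from the Cauchy integral formula for f^k on circles of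
  radius r \<rightarrow> 1: dominated convergence and the unimodular radial limits give
  |f(z)|^k \<le> 1 / (1 - |z|) for every k, and k \<rightarrow> \<infinity> removes the constant.
\<close>

lemma norm_le_circle_integral:
  fixes f :: "complex \<Rightarrow> complex"
  assumes hol: "f holomorphic_on cball 0 r" and z: "norm z < r"
  shows "2*pi * norm (f z) \<le> r / (r - norm z) * integral {0..2*pi} (\<lambda>t. norm (f (of_real r * cis t)))"
proof -
  define F where "F t = f (of_real r * cis t) / (of_real r * cis t - z) * of_real r * \<i> * cis t" for t
  define G where "G t = r / (r - norm z) * norm (f (of_real r * cis t))" for t
  have r: "0 < r" using z by (meson norm_ge_zero le_less_trans)
  have "((\<lambda>w. f w / (w - z)) has_contour_integral (2 * of_real pi * \<i> * f z)) (circlepath 0 r)"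
    using Cauchy_integral_circlepath_simple[OF hol] z by simp
  then have F_int: "(F has_integral (2 * of_real pi * \<i> * f z)) {0..2*pi}"
    unfolding circlepath_def F_def
    by (subst (asm) has_contour_integral_part_circlepath_iff) auto
  have dist: "r - norm z \<le> norm (of_real r * cis t - z)" for t
    using norm_triangle_ineq2[of "of_real r * cis t" z] r by (simp add: norm_mult)
  have FG: "norm (F t) \<le> G t" for t
  proof -
    have "norm (F t) = r / norm (of_real r * cis t - z) * norm (f (of_real r * cis t))"
      using r by (simp add: F_def norm_mult norm_divide)
    also have "\<dots> \<le> G t"
      unfolding G_def using dist[of t] z r
      by (intro mult_right_mono divide_left_mono) (auto intro!: mult_pos_pos)
    finally show ?thesis .
  qed
  have "continuous_on (cball 0 r) f"
    using hol holomorphic_on_imp_continuous_on by blast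
  then have "continuous_on {0..2*pi} (\<lambda>t. f (of_real r * cis t))"
    by (rule continuous_on_compose2) (use r in \<open>auto intro!: continuous_intros simp: norm_mult\<close>)
  then have "continuous_on {0..2*pi} G"
    unfolding G_def by (intro continuous_intros)
  then have G_int: "G integrable_on {0..2*pi}"
    by (rule integrable_continuous_interval)
  have "2*pi * norm (f z) = norm (integral {0..2*pi} F)"
    using F_int by (simp add: integral_unique norm_mult)
  also have "\<dots> \<le> integral {0..2*pi} G"
    using F_int G_int FG by (intro integral_norm_bound_integral) (auto simp: has_integral_integrable)
  also have "\<dots> = r / (r - norm z) * integral {0..2*pi} (\<lambda>t. norm (f (of_real r * cis t)))"
    unfolding G_def by simp
  finally show ?thesis .
qed

lemma inner_function_circle_integral_tendsto:
  assumes inner: "inner_function f" and r_lim: "r \<longlonglongrightarrow> 1" and r: "\<And>j. r j \<in> {0..<1}"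
  shows "(\<lambda>j. integral {0..2*pi} (\<lambda>t. norm (f (of_real (r j) * cis t)) ^ k)) \<longlonglongrightarrow> 2*pi"
proof -
  have in_disk: "of_real (r j) * cis t \<in> ball 0 1" for j t
    using r[of j] by (simp add: norm_mult)
  have hol: "f holomorphic_on ball 0 1" and bdd: "bounded (f ` ball 0 1)"
    and ae: "AE \<theta> in lborel. \<theta> \<in> {0..2*pi} \<longrightarrow>
        (\<exists>L. ((\<lambda>s. f (of_real s * cis \<theta>)) \<longlongrightarrow> L) (at_left 1) \<and> norm L = 1)"
    using inner unfolding inner_function_def by auto
  from ae have "AE \<theta> in lebesgue. \<theta> \<in> {0..2*pi} \<longrightarrow>
        (\<exists>L. ((\<lambda>s. f (of_real s * cis \<theta>)) \<longlongrightarrow> L) (at_left 1) \<and> norm L = 1)"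
    by (rule AE_completion)
  then obtain N where N: "negligible N" and radial: "\<And>\<theta>. \<theta> \<in> {0..2*pi} - N \<Longrightarrow>
        \<exists>L. ((\<lambda>s. f (of_real s * cis \<theta>)) \<longlongrightarrow> L) (at_left 1) \<and> norm L = 1"
    unfolding eventually_ae_filter_negligible by blast
  obtain M where M: "\<And>w. w \<in> ball 0 1 \<Longrightarrow> norm (f w) \<le> M"
    using bdd unfolding bounded_iff by blast
  \<comment> \<open>Redefining the integrands as 1 on the null set N makes them converge everywhere.\<close>
  define h where "h j t = (if t \<in> N then 1 else norm (f (of_real (r j) * cis t)) ^ k)" for j t
  have "continuous_on {0..2*pi} (\<lambda>t. f (of_real (r j) * cis t))" for j
    using holomorphic_on_imp_continuous_on[OF hol]
    by (rule continuous_on_compose2) (auto intro!: continuous_intros in_disk)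
  then have "(\<lambda>t. norm (f (of_real (r j) * cis t)) ^ k) integrable_on {0..2*pi}" for j
    by (intro integrable_continuous_interval continuous_intros)
  then have h_int: "h j integrable_on {0..2*pi}" for j
    by (rule integrable_spike[OF _ N]) (simp add: h_def)
  have h_bound: "norm (h j t) \<le> max 1 (M ^ k)" for j t
  proof -
    have "norm (f (of_real (r j) * cis t)) ^ k \<le> M ^ k"
      by (intro power_mono M in_disk) simp
    then show ?thesis by (simp add: h_def le_max_iff_disj)
  qed
  have r_at: "filterlim r (at_left 1) sequentially"
    using r_lim r by (intro tendsto_imp_filterlim_at_left) (auto simp: less_eq_real_def)
  have h_lim: "(\<lambda>j. h j t) \<longlonglongrightarrow> 1" if t: "t \<in> {0..2*pi}" for t
  proof (cases "t \<in> N")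
    case False
    then obtain L where L: "((\<lambda>s. f (of_real s * cis t)) \<longlongrightarrow> L) (at_left 1)" "norm L = 1"
      using radial t by blast
    have "(\<lambda>j. norm (f (of_real (r j) * cis t)) ^ k) \<longlonglongrightarrow> norm L ^ k"
      using filterlim_compose[OF L(1) r_at] by (intro tendsto_intros) (simp add: o_def)
    then show ?thesis using False L(2) by (simp add: h_def)
  qed (simp add: h_def)
  have "(\<lambda>j. integral {0..2*pi} (h j)) \<longlonglongrightarrow> integral {0..2*pi} (\<lambda>_. 1::real)"
    by (rule dominated_convergence[OF h_int _ h_bound h_lim])
      (auto intro: integrable_continuous_interval continuous_on_const)
  moreover have "integral {0..2*pi} (h j) =
      integral {0..2*pi} (\<lambda>t. norm (f (of_real (r j) * cis t)) ^ k)" for j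
    by (rule integral_spike[OF N]) (simp add: h_def)
  ultimately show ?thesis by simp
qed

lemma inner_function_power_bound:
  assumes inner: "inner_function f" and z: "norm z < 1"
  shows "norm (f z) ^ k \<le> 1 / (1 - norm z)"
proof -
  define r where "r j = 1 - (1 - norm z) / (real j + 2)" for j
  have r_bounds: "norm z < r j" "r j < 1" for j
  proof -
    have "0 < (1 - norm z) / (real j + 2)" "(1 - norm z) / (real j + 2) < 1 - norm z"
      using z by (auto simp: divide_less_eq)
    then show "norm z < r j" "r j < 1" unfolding r_def by linarith+
  qed
  have r_lim: "r \<longlonglongrightarrow> 1"
    unfolding r_def by real_asymp
  have hol: "(\<lambda>w. f w ^ k) holomorphic_on ball 0 1"
    using inner unfolding inner_function_def by (auto intro: holomorphic_on_power)
  have "2*pi * norm (f z) ^ k \<le>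
      r j / (r j - norm z) * integral {0..2*pi} (\<lambda>t. norm (f (of_real (r j) * cis t)) ^ k)" for j
  proof -
    have "cball 0 (r j) \<subseteq> ball 0 1"
      using r_bounds(2)[of j] by auto
    then show ?thesis
      using norm_le_circle_integral[OF holomorphic_on_subset[OF hol] r_bounds(1), of j]
      by (simp add: norm_power)
  qed
  moreover have "(\<lambda>j. r j / (r j - norm z) * integral {0..2*pi} (\<lambda>t. norm (f (of_real (r j) * cis t)) ^ k))
      \<longlonglongrightarrow> 1 / (1 - norm z) * (2*pi)"
    using z r_bounds
    by (intro tendsto_intros r_lim inner_function_circle_integral_tendsto[OF inner])
       (auto intro: less_imp_le[OF le_less_trans[OF norm_ge_zero r_bounds(1)]])
  ultimately have "2*pi * norm (f z) ^ k \<le> 1 / (1 - norm z) * (2*pi)"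
    by (intro LIMSEQ_le_const) auto
  then show ?thesis
    by (metis mult.commute mult_le_cancel_left_pos pi_gt_zero mult_pos_pos zero_less_numeral)
qed

lemma inner_function_norm_le_1:
  assumes "inner_function f" and "norm z < 1"
  shows "norm (f z) \<le> 1"
proof (rule ccontr)
  assume "\<not> norm (f z) \<le> 1"
  then obtain k where "1 / (1 - norm z) < norm (f z) ^ k"
    using real_arch_pow by (meson not_le)
  with inner_function_power_bound[OF assms, of k] show False by simp
qed

lemma T_eq: "T w = - \<i> * (w + \<i>) / (w - \<i>)"
proof -
  have "1 - \<i> * w = - \<i> * (w + \<i>)" "1 + \<i> * w = \<i> * (w - \<i>)"
    by (simp_all add: algebra_simps)
  then have "T w = \<i> * (- \<i> * (w + \<i>)) / (\<i> * (w - \<i>))"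
    unfolding T_def by (simp only:)
  also have "\<dots> = - \<i> * (w + \<i>) / (w - \<i>)"
    by (rule mult_divide_mult_cancel_left) simp
  finally show ?thesis .
qed

lemma one_minus_T_div_T:
  assumes "a \<noteq> \<i>" "b \<noteq> \<i>" "b \<noteq> -\<i>"
  shows "1 - T a / T b = 2 * \<i> * (a - b) / ((a - \<i>) * (b + \<i>))"
proof -
  have nz: "a - \<i> \<noteq> 0" "b + \<i> \<noteq> 0" "b - \<i> \<noteq> 0"
    using assms by (auto simp: add_eq_0_iff2)
  have "T a / T b = (- \<i> * (a + \<i>) * (b - \<i>)) / ((a - \<i>) * (- \<i> * (b + \<i>)))"
    unfolding T_eq using nz
    by (simp only: divide_divide_eq_left divide_divide_eq_right times_divide_eq_left mult.assoc)
  also have "\<dots> = (a + \<i>) * (b - \<i>) / ((a - \<i>) * (b + \<i>))"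
    by (simp add: mult.left_commute)
  finally have "1 - T a / T b = ((a - \<i>) * (b + \<i>) - (a + \<i>) * (b - \<i>)) / ((a - \<i>) * (b + \<i>))"
    using nz by (simp add: diff_divide_distrib)
  also have "(a - \<i>) * (b + \<i>) - (a + \<i>) * (b - \<i>) = 2 * \<i> * (a - b)"
    by (simp add: algebra_simps)
  finally show ?thesis .
qed

text \<open>T has poles at \<i> and -\<i>, which division by zero turns into the value 0.\<close>
lemma T_pm_i: "T \<i> = 0" "T (-\<i>) = 0"
  by (simp_all add: T_def)

lemma norm_diff_le_T_quotient:
  assumes a: "norm a \<le> 1" and b: "norm b \<le> 1"
  shows "norm (a - b) \<le> 2 * norm (1 - T a / T b)"
proof (cases "a = \<i> \<or> b = \<i> \<or> b = -\<i>")
  case True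
  then have "norm (1 - T a / T b) = 1" by (auto simp: T_pm_i)
  with a b norm_triangle_ineq4[of a b] show ?thesis by simp
next
  case False
  have "norm (a - \<i>) \<le> 2" "norm (b + \<i>) \<le> 2"
    using norm_triangle_ineq4[of a \<i>] norm_triangle_ineq[of b \<i>] a b by simp_all
  moreover have "0 < norm (a - \<i>)" "0 < norm (b + \<i>)"
    using False by (auto simp: add_eq_0_iff2)
  ultimately have "2 * norm (a - b) / (2 * 2) \<le> 2 * norm (a - b) / (norm (a - \<i>) * norm (b + \<i>))"
    by (intro divide_left_mono mult_mono mult_pos_pos) auto
  also have "\<dots> = norm (1 - T a / T b)"
    using False by (simp add: one_minus_T_div_T norm_mult norm_divide)
  finally show ?thesis by simp
qed

lemma norm_T_quotient_le:
  assumes \<delta>: "\<delta> > 0" and a: "\<delta> \<le> norm (a - \<i>)" and b: "\<delta> \<le> norm (b + \<i>)"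
  shows "norm (1 - T a / T b) \<le> 2 / \<delta>\<^sup>2 * norm (a - b)"
proof (cases "b = \<i>")
  case True
  then have "\<delta> \<le> 2" using b by (simp add: norm_mult)
  then have "1 \<le> 2 / \<delta>\<^sup>2 * \<delta>"
    using \<delta> by (simp add: power2_eq_square field_simps)
  also have "\<dots> \<le> 2 / \<delta>\<^sup>2 * norm (a - b)"
    using a True \<delta> by (intro mult_left_mono) auto
  finally show ?thesis using True by (simp add: T_pm_i)
next
  case False
  then have "a \<noteq> \<i>" "b \<noteq> -\<i>" using a b \<delta> by auto
  then have "norm (1 - T a / T b) = 2 * norm (a - b) / (norm (a - \<i>) * norm (b + \<i>))"
    using False by (simp add: one_minus_T_div_T norm_mult norm_divide)
  also have "\<dots> \<le> 2 * norm (a - b) / (\<delta> * \<delta>)"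
    using a b \<delta> by (intro divide_left_mono mult_mono mult_pos_pos) auto
  finally show ?thesis by (simp add: power2_eq_square)
qed

lemma sum_atLeastAtMost_1_diff:
  "m \<le> n \<Longrightarrow> sum f {1..n} - sum f {1..m} = sum f {Suc m..n}"
  for f :: "nat \<Rightarrow> 'a::ab_group_add"
  using sum.ub_add_nat[of 1 m f "n - m"] by simp

lemma uniformly_convergent_on_sum_comparison:
  fixes u v :: "nat \<Rightarrow> 'a \<Rightarrow> real"
  assumes C: "C > 0"
    and le: "\<And>n z. n \<ge> n0 \<Longrightarrow> z \<in> K \<Longrightarrow> 0 \<le> u n z \<and> u n z \<le> C * v n z"
    and conv: "uniformly_convergent_on K (\<lambda>N z. \<Sum>n\<in>{1..N}. v n z)"
  shows "uniformly_convergent_on K (\<lambda>N z. \<Sum>n\<in>{1..N}. u n z)"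
  unfolding uniformly_convergent_eq_Cauchy
proof (rule uniformly_Cauchy_onI')
  fix e :: real assume "e > 0"
  then obtain M where M: "\<And>z m n. z \<in> K \<Longrightarrow> m \<ge> M \<Longrightarrow> n \<ge> M \<Longrightarrow>
      dist (\<Sum>k\<in>{1..m}. v k z) (\<Sum>k\<in>{1..n}. v k z) < e / C"
    using conv C unfolding uniformly_convergent_eq_Cauchy uniformly_Cauchy_on_def
    by (meson divide_pos_pos)
  have "dist (\<Sum>k\<in>{1..m}. u k z) (\<Sum>k\<in>{1..n}. u k z) < e"
    if z: "z \<in> K" and m: "m \<ge> max M n0" and n: "n > m" for z m n
  proof -
    have tail: "sum (w z) {1..n} - sum (w z) {1..m} = sum (w z) {Suc m..n}" for w :: "'a \<Rightarrow> nat \<Rightarrow> real"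
      using n by (intro sum_atLeastAtMost_1_diff) simp
    have dist_tail: "dist (sum (w z) {1..m}) (sum (w z) {1..n}) = \<bar>sum (w z) {Suc m..n}\<bar>"
      for w :: "'a \<Rightarrow> nat \<Rightarrow> real"
      by (metis tail dist_commute dist_real_def)
    have "0 \<le> (\<Sum>k\<in>{Suc m..n}. u k z)"
      using le z m by (intro sum_nonneg) auto
    then have "dist (\<Sum>k\<in>{1..m}. u k z) (\<Sum>k\<in>{1..n}. u k z) = (\<Sum>k\<in>{Suc m..n}. u k z)"
      using dist_tail[of "\<lambda>z k. u k z"] by simp
    also have "\<dots> \<le> C * (\<Sum>k\<in>{Suc m..n}. v k z)"
      unfolding sum_distrib_left using le z m by (intro sum_mono) auto
    also have "\<dots> \<le> C * dist (\<Sum>k\<in>{1..m}. v k z) (\<Sum>k\<in>{1..n}. v k z)"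
      using dist_tail[of "\<lambda>z k. v k z"] C by simp
    also have "\<dots> < C * (e / C)"
      using M[OF z, of m n] m n C by (intro mult_strict_left_mono) auto
    finally show ?thesis using C by simp
  qed
  then show "\<exists>M. \<forall>z\<in>K. \<forall>m\<ge>M. \<forall>n>m. dist (\<Sum>k\<in>{1..m}. u k z) (\<Sum>k\<in>{1..n}. u k z) < e"
    by blast
qed

lemma loc_unif_series_comparison:
  assumes "loc_unif_series v"
    and "\<And>K. compact K \<Longrightarrow> K \<subseteq> ball 0 1 \<Longrightarrow>
           \<exists>C>0. \<exists>n0. \<forall>n\<ge>n0. \<forall>z\<in>K. 0 \<le> u n z \<and> u n z \<le> C * v n z"
  shows "loc_unif_series u"
  using assms uniformly_convergent_on_sum_comparison unfolding loc_unif_series_def by metis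

lemma compact_subset_unit_ball_norm_le:
  fixes K :: "'a::real_normed_vector set"
  assumes "compact K" "K \<subseteq> ball 0 1"
  obtains r where "0 < r" "r < 1" "\<And>z. z \<in> K \<Longrightarrow> norm z \<le> r"
proof (cases "K = {}")
  case False
  then obtain x where x: "x \<in> K" "\<And>y. y \<in> K \<Longrightarrow> norm y \<le> norm x"
    using continuous_attains_sup[OF assms(1) False, of norm] continuous_on_norm_id by blast
  moreover have "norm x < 1" using x assms(2) by auto
  ultimately show ?thesis
    by (intro that[of "max (1/2) (norm x)"]) (auto simp: le_max_iff_disj)
qed (intro that[of "1/2"], auto)

theorem theorem6p6:
  fixes phip phim :: "nat \<Rightarrow> complex \<Rightarrow> complex"
  assumes inner_p: "\<And>n. n \<ge> 1 \<Longrightarrow> inner_function (phip n)"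
    and inner_m: "\<And>n. n \<ge> 1 \<Longrightarrow> inner_function (phim n)"
    and away: "\<And>r. 0 < r \<Longrightarrow> r < 1 \<Longrightarrow>
       \<exists>\<delta>>0. \<exists>n0. \<forall>n\<ge>n0. \<forall>z. norm z \<le> r \<longrightarrow>
          norm (phip n z - \<i>) \<ge> \<delta> \<and> norm (phim n z + \<i>) \<ge> \<delta>"
  shows "prod_abs_loc_unif (\<lambda>n z. T (phip n z) / T (phim n z))
     \<longleftrightarrow> loc_unif_series (\<lambda>n z. norm (phip n z - phim n z))"
  unfolding prod_abs_loc_unif_def
proof
  assume "loc_unif_series (\<lambda>n z. norm (1 - T (phip n z) / T (phim n z)))"
  then show "loc_unif_series (\<lambda>n z. norm (phip n z - phim n z))"
  proof (rule loc_unif_series_comparison)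
    fix K :: "complex set" assume "K \<subseteq> ball 0 1"
    then have "norm (phip n z - phim n z) \<le> 2 * norm (1 - T (phip n z) / T (phim n z))"
      if "n \<ge> 1" "z \<in> K" for n z
      using that by (intro norm_diff_le_T_quotient inner_function_norm_le_1 inner_p inner_m) auto
    then show "\<exists>C>0. \<exists>n0. \<forall>n\<ge>n0. \<forall>z\<in>K. 0 \<le> norm (phip n z - phim n z) \<and>
        norm (phip n z - phim n z) \<le> C * norm (1 - T (phip n z) / T (phim n z))"
      by (intro exI[of _ 2] exI[of _ 1]) auto
  qed
next
  assume "loc_unif_series (\<lambda>n z. norm (phip n z - phim n z))"
  then show "loc_unif_series (\<lambda>n z. norm (1 - T (phip n z) / T (phim n z)))"
  proof (rule loc_unif_series_comparison)
    fix K :: "complex set" assume "compact K" "K \<subseteq> ball 0 1"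
    then obtain r where "0 < r" "r < 1" and r: "\<And>z. z \<in> K \<Longrightarrow> norm z \<le> r"
      using compact_subset_unit_ball_norm_le by metis
    obtain \<delta> n0 where "\<delta> > 0" and \<delta>: "\<And>n z. n \<ge> n0 \<Longrightarrow> norm z \<le> r \<Longrightarrow>
        norm (phip n z - \<i>) \<ge> \<delta> \<and> norm (phim n z + \<i>) \<ge> \<delta>"
      using away[OF \<open>0 < r\<close> \<open>r < 1\<close>] by blast
    then have "norm (1 - T (phip n z) / T (phim n z)) \<le> 2 / \<delta>\<^sup>2 * norm (phip n z - phim n z)"
      if "n \<ge> n0" "z \<in> K" for n z
      using \<delta>[OF that(1) r[OF that(2)]] by (intro norm_T_quotient_le) auto
    with \<open>\<delta> > 0\<close> show "\<exists>C>0. \<exists>n0. \<forall>n\<ge>n0. \<forall>z\<in>K. 0 \<le> norm (1 - T (phip n z) / T (phim n z)) \<and>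
        norm (1 - T (phip n z) / T (phim n z)) \<le> C * norm (phip n z - phim n z)"
      by (intro exI[of _ "2 / \<delta>\<^sup>2"] exI[of _ n0]) auto
  qed
qed

end
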